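(* Let $F^\pm\in\mathcal E(\lambda,\Lambda)$, let $f^\pm$ be uniformly continuous on $B_1^\pm$ and $g$ uniformly continuous on $T$. Let $u$ be a bounded viscosity subsolution of the flat problem (FP). Fix $0<\rho<1$. Then for every sufficiently small $\varepsilon>0$, the upper $\varepsilon$-envelope $u^\varepsilon$ is a viscosity subsolution of $$F^\pm(D^2u^\varepsilon)=f^\pm_\varepsilon\ \text{in }B_r^\pm,\qquad (u^\varepsilon)^+_{x_n}-(u^\varepsilon)^-_{x_n}=g_\varepsilon\ \text{on }T_r=B_r\cap\{x_n=0\},$$ for any $r\le\rho-r_\varepsilon$, where $r_\varepsilon=(2\varepsilon\|u\|_{L^\infty(B_1)})^{1/2}$, $f^\pm_\varepsilon=f^\pm-\omega_{f^\pm}(r_\varepsilon)$ and $g_\varepsilon=g-\omega_g(r_\varepsilon)$.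
   Context: $\mathcal E(\lambda,\Lambda)$: $F:\mathcal S^n\to\mathbb R$ with $F(0)=0$ and $\lambda\|N\|\le F(M+N)-F(M)\le\Lambda\|N\|$ for $N\ge0$. Flat setting: $B_r^\pm=B_r\cap\{\pm x_n>0\}$, $T=B_1\cap\{x_n=0\}$; (FP): $F^\pm(D^2u)=f^\pm$ in $B_1^\pm$, $u^+_{x_n}-u^-_{x_n}=g$ on $T$. Viscosity subsolution of (FP): $u$ USC such that for $\varphi$ touching $u$ from above at $x_0$: if $x_0\in B_1^\pm$ and $\varphi$ is $C^2$ near $x_0$ then $F^\pm(D^2\varphi(x_0))\ge f^\pm(x_0)$; if $x_0\in T$ and $\varphi$ is continuous with restrictions $\varphi^\pm$ to $\overline{B_\delta(x_0)\cap\{\pm x_n>0\}}$ of class $C^2$, then $\varphi^+_{x_n}(x_0)-\varphi^-_{x_n}(x_0)\ge g(x_0)$ (the same notion on $B_r$, $T_r$ with $f_\varepsilon^\pm,g_\varepsilon$). Upper $\varepsilon$-envelope in the $x'$-direction: for $y=(y',y_n)\in\overline{B_\rho}$, $u^\varepsilon(y',y_n)=\sup\{u(x',y_n)-\frac1\varepsilon|x'-y'|^2:(x',y_n)\in\overline{B_\rho}\}$. Modulus of continuity: $\omega_h(r)=\sup_{|x-y|\le r}|h(x)-h(y)|$. *)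

theory Defs
  imports "HOL-Analysis.Analysis"
begin

text \<open>Points of R^n are vectors real^'n; the distinguished coordinate k plays the
role of x_n (the normal direction of the flat interface).\<close>

definition sym_mat :: "real^'n^'n \<Rightarrow> bool" where
  "sym_mat M \<longleftrightarrow> transpose M = M"

definition psd_mat :: "real^'n^'n \<Rightarrow> bool" where
  "psd_mat N \<longleftrightarrow> sym_mat N \<and> (\<forall>x. 0 \<le> x \<bullet> (N *v x))"

definition mat_norm :: "real^'n^'n \<Rightarrow> real" where
  "mat_norm N = onorm (\<lambda>x. N *v x)"

definition ellip_class :: "real \<Rightarrow> real \<Rightarrow> (real^'n^'n \<Rightarrow> real) \<Rightarrow> bool" where
  "ellip_class lam Lam F \<longleftrightarrow> 0 < lam \<and> lam \<le> Lam \<and> F 0 = 0 \<and>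
     (\<forall>M N. sym_mat M \<and> psd_mat N \<longrightarrow>
        lam * mat_norm N \<le> F (M + N) - F M \<and> F (M + N) - F M \<le> Lam * mat_norm N)"

definition pderiv :: "'n \<Rightarrow> (real^'n \<Rightarrow> real) \<Rightarrow> real^'n \<Rightarrow> real" where
  "pderiv i f x = frechet_derivative f (at x) (axis i 1)"

definition grad :: "(real^'n \<Rightarrow> real) \<Rightarrow> real^'n \<Rightarrow> real^'n" where
  "grad f x = (\<chi> j. pderiv j f x)"

definition hess :: "(real^'n \<Rightarrow> real) \<Rightarrow> real^'n \<Rightarrow> real^'n^'n" where
  "hess f x = (\<chi> i j. pderiv i (\<lambda>y. grad f y $ j) x)"

definition C2_on :: "(real^'n) set \<Rightarrow> (real^'n \<Rightarrow> real) \<Rightarrow> bool" where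
  "C2_on S f \<longleftrightarrow> open S \<and> (\<forall>x\<in>S. f differentiable (at x)) \<and>
     (\<forall>x\<in>S. \<forall>j. (\<lambda>y. grad f y $ j) differentiable (at x)) \<and>
     continuous_on S (hess f)"

definition usc_on :: "(real^'n) set \<Rightarrow> (real^'n \<Rightarrow> real) \<Rightarrow> bool" where
  "usc_on S u \<longleftrightarrow> (\<forall>x\<in>S. \<forall>e>0. \<exists>d>0. \<forall>y\<in>S. dist y x < d \<longrightarrow> u y < u x + e)"

definition touches_above :: "(real^'n) set \<Rightarrow> (real^'n \<Rightarrow> real) \<Rightarrow> (real^'n \<Rightarrow> real) \<Rightarrow> real^'n \<Rightarrow> bool" where
  "touches_above S u \<phi> x0 \<longleftrightarrow> \<phi> x0 = u x0 \<and> (\<exists>d>0. \<forall>x\<in>S \<inter> ball x0 d. u x \<le> \<phi> x)"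

text \<open>Viscosity subsolution of the flat problem in B_r:
  F^+(D^2 u) = f^+ in B_r^+, F^-(D^2 u) = f^- in B_r^-, u^+_{x_k} - u^-_{x_k} = g on T_r.
  "phi^+ of class C^2 on the closed half ball" is rendered as: phi agrees there with a
  C^2 function defined on an open neighbourhood of the closed half ball.\<close>
definition visc_sub ::
  "'n \<Rightarrow> real \<Rightarrow> (real^'n^'n \<Rightarrow> real) \<Rightarrow> (real^'n^'n \<Rightarrow> real) \<Rightarrow>
   (real^'n \<Rightarrow> real) \<Rightarrow> (real^'n \<Rightarrow> real) \<Rightarrow> (real^'n \<Rightarrow> real) \<Rightarrow> (real^'n \<Rightarrow> real) \<Rightarrow> bool" where
  "visc_sub k r Fp Fm fp fm g u \<longleftrightarrow>
     usc_on (ball 0 r) u \<and>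
     (\<forall>x0 \<phi>. x0 \<in> ball 0 r \<and> 0 < x0 $ k \<and> touches_above (ball 0 r) u \<phi> x0 \<and>
          (\<exists>d>0. C2_on (ball x0 d) \<phi>) \<longrightarrow> fp x0 \<le> Fp (hess \<phi> x0)) \<and>
     (\<forall>x0 \<phi>. x0 \<in> ball 0 r \<and> x0 $ k < 0 \<and> touches_above (ball 0 r) u \<phi> x0 \<and>
          (\<exists>d>0. C2_on (ball x0 d) \<phi>) \<longrightarrow> fm x0 \<le> Fm (hess \<phi> x0)) \<and>
     (\<forall>x0 \<phi> \<delta> \<psi>p \<psi>m Up Um. x0 \<in> ball 0 r \<and> x0 $ k = 0 \<and> touches_above (ball 0 r) u \<phi> x0 \<and>
          0 < \<delta> \<and> continuous_on (cball x0 \<delta>) \<phi> \<and>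
          closure (ball x0 \<delta> \<inter> {x. 0 < x $ k}) \<subseteq> Up \<and> C2_on Up \<psi>p \<and>
          (\<forall>x\<in>closure (ball x0 \<delta> \<inter> {x. 0 < x $ k}). \<psi>p x = \<phi> x) \<and>
          closure (ball x0 \<delta> \<inter> {x. x $ k < 0}) \<subseteq> Um \<and> C2_on Um \<psi>m \<and>
          (\<forall>x\<in>closure (ball x0 \<delta> \<inter> {x. x $ k < 0}). \<psi>m x = \<phi> x)
        \<longrightarrow> g x0 \<le> pderiv k \<psi>p x0 - pderiv k \<psi>m x0)"

definition modc :: "(real^'n) set \<Rightarrow> (real^'n \<Rightarrow> real) \<Rightarrow> real \<Rightarrow> real" where
  "modc S h r = Sup {\<bar>h x - h y\<bar> | x y. x \<in> S \<and> y \<in> S \<and> dist x y \<le> r}"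

definition upper_env :: "'n \<Rightarrow> real \<Rightarrow> real \<Rightarrow> (real^'n \<Rightarrow> real) \<Rightarrow> real^'n \<Rightarrow> real" where
  "upper_env k \<rho> \<epsilon> u y = Sup {u x - (norm (x - y))\<^sup>2 / \<epsilon> | x. x \<in> cball 0 \<rho> \<and> x $ k = y $ k}"

definition sup_norm_B1 :: "(real^'n \<Rightarrow> real) \<Rightarrow> real" where
  "sup_norm_B1 u = Sup ((\<lambda>x. \<bar>u x\<bar>) ` ball 0 1)"

end

theory Submission
  imports Defs
begin

(* Let phi touch the envelope u^eps from above at x0, and let the supremum defining u^eps(x0)
   be attained at x0 + h with h horizontal.  Then phi(. - h) + |h|^2/eps touches u from above
   at x0 + h, and comparing with the competitor x0 itself gives |h|^2 <= 2 eps sup|u|.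
   Horizontal translations preserve the half balls, the Hessian and the normal derivative, so
   the viscosity inequalities of u at x0 + h are those of u^eps at x0, up to the oscillation of
   f^+-, g over distance r_eps. *)

lemma has_derivative_shift:
  fixes f :: "'a::real_normed_vector \<Rightarrow> 'b::real_normed_vector"
  assumes "(f has_derivative D) (at (x - h))"
  shows "((\<lambda>x. f (x - h) + c) has_derivative D) (at x)"
proof -
  have "((\<lambda>x. x - h) has_derivative (\<lambda>x. x)) (at x)"
    by (auto intro!: derivative_eq_intros)
  from has_derivative_compose[OF this assms] show ?thesis
    by (auto simp: o_def intro: has_derivative_add_const)
qed

lemma frechet_derivative_shift:
  fixes f :: "'a::real_normed_vector \<Rightarrow> 'b::real_normed_vector"
  shows "frechet_derivative (\<lambda>x. f (x - h) + c) (at x) = frechet_derivative f (at (x - h))"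
proof -
  have "((\<lambda>x. f (x - h) + c) has_derivative D) (at x) \<longleftrightarrow> (f has_derivative D) (at (x - h))" for D
  proof
    assume "((\<lambda>x. f (x - h) + c) has_derivative D) (at x)"
    from has_derivative_shift[of "\<lambda>x. f (x - h) + c" D "x - h" "- h" "- c"] this
    show "(f has_derivative D) (at (x - h))" by simp
  qed (rule has_derivative_shift)
  then show ?thesis unfolding frechet_derivative_def by simp
qed

lemma pderiv_shift: "pderiv i (\<lambda>x. f (x - h) + c) x = pderiv i f (x - h)"
  unfolding pderiv_def by (simp add: frechet_derivative_shift)

lemma grad_shift: "grad (\<lambda>x. f (x - h) + c) x = grad f (x - h)"
  unfolding grad_def by (simp add: pderiv_shift)

lemma hess_shift: "hess (\<lambda>x. f (x - h) + c) x = hess f (x - h)"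
  using pderiv_shift[of _ "\<lambda>y. grad f y $ _" h 0 x]
  by (simp add: hess_def grad_shift vec_eq_iff)

lemma differentiable_shift:
  fixes f :: "'a::real_normed_vector \<Rightarrow> 'b::real_normed_vector"
  assumes "f differentiable (at (x - h))"
  shows "(\<lambda>x. f (x - h) + c) differentiable (at x)"
  using assms has_derivative_shift unfolding differentiable_def by blast

lemma C2_on_shift:
  assumes "C2_on S f" "open S'" "\<And>x. x \<in> S' \<Longrightarrow> x - h \<in> S"
  shows "C2_on S' (\<lambda>x. f (x - h) + c)"
proof -
  have "continuous_on S' (hess f \<circ> (\<lambda>x. x - h))"
    using assms by (intro continuous_on_compose continuous_intros)
      (auto simp: C2_on_def intro: continuous_on_subset)
  moreover have "(\<lambda>x. grad (\<lambda>x. f (x - h) + c) x $ j) = (\<lambda>x. grad f (x - h) $ j + 0)" for j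
    by (simp add: grad_shift)
  ultimately show ?thesis
    using assms differentiable_shift[of "\<lambda>z. grad f z $ _" _ h 0]
    by (auto simp: C2_on_def hess_shift o_def intro!: differentiable_shift)
qed

lemma translate_image_Int_halfspace:
  fixes h :: "real^'n"
  assumes "h $ k = 0"
  shows "(+) h ` (ball x0 \<delta> \<inter> {x. P (x $ k)}) = ball (x0 + h) \<delta> \<inter> {x. P (x $ k)}"
proof -
  have "(+) h ` {x. P (x $ k)} = {x. P (x $ k)}"
    using assms by (auto intro: image_eqI[of _ _ "x - h" for x])
  moreover have "inj ((+) h)"
    by (simp add: inj_on_def)
  ultimately show ?thesis
    by (metis image_Int image_add_ball)
qed

lemma translate_mem_iff: "(x::'a::ab_group_add) \<in> (+) h ` U \<longleftrightarrow> x - h \<in> U"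
  by (auto intro: image_eqI[of _ _ "x - h"])

lemma mem_closure_half_ball_translate:
  fixes h :: "real^'n"
  assumes "h $ k = 0"
  shows "x \<in> closure (ball (x0 + h) \<delta> \<inter> {x. P (x $ k)}) \<longleftrightarrow>
    x - h \<in> closure (ball x0 \<delta> \<inter> {x. P (x $ k)})"
  unfolding translate_image_Int_halfspace[OF assms, symmetric] closure_translation translate_mem_iff ..

lemma abs_le_modc:
  assumes "uniformly_continuous_on S f" "bounded S" "x \<in> S" "y \<in> S" "dist x y \<le> t"
  shows "\<bar>f x - f y\<bar> \<le> modc S f t"
proof -
  obtain B where B: "\<And>z. z \<in> S \<Longrightarrow> \<bar>f z\<bar> \<le> B"
    using bounded_uniformly_continuous_image[OF assms(1,2)] unfolding bounded_real by blast
  have "bdd_above {\<bar>f x - f y\<bar> | x y. x \<in> S \<and> y \<in> S \<and> dist x y \<le> t}"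
    by (rule bdd_aboveI[of _ "2 * B"]) (auto dest!: B intro: abs_triangle_ineq4[THEN order_trans])
  then show ?thesis unfolding modc_def by (rule cSup_upper[rotated]) (use assms in blast)
qed

lemma abs_le_sup_norm_B1:
  assumes "bounded (u ` ball 0 1)" "x \<in> ball 0 1"
  shows "\<bar>u x\<bar> \<le> sup_norm_B1 u"
proof -
  obtain B where "\<And>y. y \<in> ball 0 1 \<Longrightarrow> \<bar>u y\<bar> \<le> B"
    using assms(1) unfolding bounded_real by blast
  then show ?thesis
    unfolding sup_norm_B1_def using assms(2) by (intro cSup_upper bdd_aboveI2) auto
qed

context
  fixes k :: "'n::finite" and \<rho> \<epsilon> M :: real and u :: "real^'n \<Rightarrow> real"
  assumes usc: "usc_on (ball 0 1) u" and bnd: "\<And>x. x \<in> ball 0 1 \<Longrightarrow> \<bar>u x\<bar> \<le> M"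
    and rho: "0 < \<rho>" "\<rho> < 1" and eps: "0 < \<epsilon>"
begin

lemma cball_rho_subset: "cball 0 \<rho> \<subseteq> ball (0::real^'n) 1"
  using rho by auto

lemma upper_env_set_bdd_above:
  "bdd_above {u x - (norm (x - y))\<^sup>2 / \<epsilon> | x. x \<in> cball 0 \<rho> \<and> x $ k = y $ k}"
proof (rule bdd_aboveI[of _ M], clarify)
  fix x :: "real^'n" assume "x \<in> cball 0 \<rho>"
  then have "u x \<le> M" using bnd[of x] cball_rho_subset by auto
  moreover have "0 \<le> (norm (x - y))\<^sup>2 / \<epsilon>" using eps by simp
  ultimately show "u x - (norm (x - y))\<^sup>2 / \<epsilon> \<le> M" by linarith
qed

lemma upper_env_ge:
  "x \<in> cball 0 \<rho> \<Longrightarrow> x $ k = y $ k \<Longrightarrow> u x - (norm (x - y))\<^sup>2 / \<epsilon> \<le> upper_env k \<rho> \<epsilon> u y"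
  unfolding upper_env_def by (rule cSup_upper[OF _ upper_env_set_bdd_above]) auto

lemma upper_env_approx:
  assumes "y \<in> cball 0 \<rho>" "0 < e"
  shows "\<exists>x. x \<in> cball 0 \<rho> \<and> x $ k = y $ k \<and>
    upper_env k \<rho> \<epsilon> u y - e < u x - (norm (x - y))\<^sup>2 / \<epsilon>"
proof -
  let ?S = "{u x - (norm (x - y))\<^sup>2 / \<epsilon> | x. x \<in> cball 0 \<rho> \<and> x $ k = y $ k}"
  have ne: "?S \<noteq> {}"
    using assms(1) by auto
  have "\<exists>v\<in>?S. Sup ?S - e < v"
    unfolding less_cSup_iff[OF ne upper_env_set_bdd_above, symmetric] using assms(2) by simp
  then show ?thesis
    unfolding upper_env_def by blast
qed

lemma upper_env_limit_bound:
  assumes X: "\<And>n. X n \<in> cball 0 \<rho>" "\<And>n. X n $ k = Y n $ k"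
    and lim: "Y \<longlonglongrightarrow> y" "A \<longlonglongrightarrow> a"
    and le: "\<And>n. A n \<le> u (X n) - (norm (X n - Y n))\<^sup>2 / \<epsilon>"
  shows "\<exists>l\<in>cball 0 \<rho>. l $ k = y $ k \<and> a \<le> u l - (norm (l - y))\<^sup>2 / \<epsilon>"
proof -
  obtain l q where l: "l \<in> cball 0 \<rho>" "strict_mono q" "(X \<circ> q) \<longlonglongrightarrow> l"
    using compact_imp_seq_compact[OF compact_cball] X(1) unfolding seq_compact_def by metis
  have Yq: "(Y \<circ> q) \<longlonglongrightarrow> y" and Aq: "(A \<circ> q) \<longlonglongrightarrow> a"
    using lim by (auto intro: LIMSEQ_subseq_LIMSEQ[OF _ l(2)])
  have "(\<lambda>n. (X \<circ> q) n $ k) = (\<lambda>n. (Y \<circ> q) n $ k)"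
    using X(2) by simp
  then have "l $ k = y $ k"
    using tendsto_vec_nth[OF l(3), of k] tendsto_vec_nth[OF Yq, of k] LIMSEQ_unique by metis
  moreover have "a \<le> u l - (norm (l - y))\<^sup>2 / \<epsilon>"
  proof (rule field_le_epsilon)
    fix e :: real assume "0 < e"
    then obtain d where d: "d > 0" "\<And>z. z \<in> ball 0 1 \<Longrightarrow> dist z l < d \<Longrightarrow> u z < u l + e"
      using usc l(1) cball_rho_subset unfolding usc_on_def by blast
    have "eventually (\<lambda>n. (A \<circ> q) n \<le> u l + e - (norm ((X \<circ> q) n - (Y \<circ> q) n))\<^sup>2 / \<epsilon>) sequentially"
      using tendstoD[OF l(3) d(1)]
    proof eventually_elim
      case (elim n)
      then have "u (X (q n)) < u l + e"
        using d(2) X(1) cball_rho_subset by force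
      then show ?case using le[of "q n"] by simp
    qed
    moreover have "(\<lambda>n. u l + e - (norm ((X \<circ> q) n - (Y \<circ> q) n))\<^sup>2 / \<epsilon>)
        \<longlonglongrightarrow> u l + e - (norm (l - y))\<^sup>2 / \<epsilon>"
      using l(3) Yq eps by (auto simp: o_def intro!: tendsto_intros)
    ultimately have "a \<le> u l + e - (norm (l - y))\<^sup>2 / \<epsilon>"
      using tendsto_le[OF trivial_limit_sequentially _ Aq] by blast
    then show "a \<le> u l - (norm (l - y))\<^sup>2 / \<epsilon> + e" by simp
  qed
  ultimately show ?thesis using l(1) by blast
qed

lemma upper_env_attained:
  assumes "y \<in> cball 0 \<rho>"
  shows "\<exists>x. x \<in> cball 0 \<rho> \<and> x $ k = y $ k \<and>
    upper_env k \<rho> \<epsilon> u y = u x - (norm (x - y))\<^sup>2 / \<epsilon>"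
proof -
  let ?U = "upper_env k \<rho> \<epsilon> u y"
  have "\<forall>n. \<exists>x. x \<in> cball 0 \<rho> \<and> x $ k = y $ k \<and>
      ?U - inverse (real (Suc n)) < u x - (norm (x - y))\<^sup>2 / \<epsilon>"
    by (intro allI upper_env_approx[OF assms]) simp
  then obtain X where X: "\<And>n. X n \<in> cball 0 \<rho>" "\<And>n. X n $ k = y $ k"
    "\<And>n. ?U - inverse (real (Suc n)) < u (X n) - (norm (X n - y))\<^sup>2 / \<epsilon>"
    by metis
  have "(\<lambda>n. ?U - inverse (real (Suc n))) \<longlonglongrightarrow> ?U"
    using tendsto_diff[OF tendsto_const LIMSEQ_inverse_real_of_nat] by simp
  moreover have "?U - inverse (real (Suc n)) \<le> u (X n) - (norm (X n - y))\<^sup>2 / \<epsilon>" for n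
    using X(3)[of n] by simp
  ultimately obtain l where l: "l \<in> cball 0 \<rho>" "l $ k = y $ k"
    "?U \<le> u l - (norm (l - y))\<^sup>2 / \<epsilon>"
    using upper_env_limit_bound[where X = X and Y = "\<lambda>_. y", OF X(1,2) tendsto_const] by blast
  then show ?thesis
    using upper_env_ge[OF l(1,2)] by (intro exI[of _ l]) auto
qed

lemma usc_on_upper_env:
  assumes "r \<le> \<rho>"
  shows "usc_on (ball 0 r) (upper_env k \<rho> \<epsilon> u)"
  unfolding usc_on_def
proof (intro ballI allI impI, rule ccontr)
  let ?U = "upper_env k \<rho> \<epsilon> u"
  fix y e assume e: "0 < (e::real)"
    and no_nbhd: "\<not> (\<exists>d>0. \<forall>z\<in>ball 0 r. dist z y < d \<longrightarrow> ?U z < ?U y + e)"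
  have "\<forall>n. \<exists>z. z \<in> ball 0 r \<and> dist z y < inverse (real (Suc n)) \<and> ?U y + e \<le> ?U z"
  proof
    fix n
    have "0 < inverse (real (Suc n))" by simp
    with no_nbhd have "\<exists>z\<in>ball 0 r. dist z y < inverse (real (Suc n)) \<and> \<not> ?U z < ?U y + e"
      by blast
    then show "\<exists>z. z \<in> ball 0 r \<and> dist z y < inverse (real (Suc n)) \<and> ?U y + e \<le> ?U z"
      by (auto simp: not_less)
  qed
  then obtain Z where Z: "\<And>n. Z n \<in> ball 0 r" "\<And>n. dist (Z n) y < inverse (real (Suc n))"
    "\<And>n. ?U y + e \<le> ?U (Z n)"
    by metis
  have Zc: "Z n \<in> cball 0 \<rho>" for n
    using Z(1)[of n] assms by simp
  have "\<forall>n. \<exists>x. x \<in> cball 0 \<rho> \<and> x $ k = Z n $ k \<and>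
      ?U (Z n) = u x - (norm (x - Z n))\<^sup>2 / \<epsilon>"
    using upper_env_attained[OF Zc] by blast
  then obtain X where X: "\<And>n. X n \<in> cball 0 \<rho>" "\<And>n. X n $ k = Z n $ k"
    "\<And>n. ?U (Z n) = u (X n) - (norm (X n - Z n))\<^sup>2 / \<epsilon>"
    by metis
  have "(\<lambda>n. dist (Z n) y) \<longlonglongrightarrow> 0"
    using Z(2) by (intro Lim_null_comparison[OF _ LIMSEQ_inverse_real_of_nat]) (simp add: less_imp_le)
  then have "Z \<longlonglongrightarrow> y"
    by (rule tendsto_dist_iff[THEN iffD2])
  moreover have "?U y + e \<le> u (X n) - (norm (X n - Z n))\<^sup>2 / \<epsilon>" for n
    using X(3)[of n] Z(3)[of n] by simp
  ultimately obtain l where l: "l \<in> cball 0 \<rho>" "l $ k = y $ k"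
    "?U y + e \<le> u l - (norm (l - y))\<^sup>2 / \<epsilon>"
    using upper_env_limit_bound[where X = X and Y = Z, OF X(1,2) _ tendsto_const] by blast
  then show False
    using upper_env_ge[OF l(1,2)] e by linarith
qed

lemma radius_le_rho:
  assumes "r \<le> \<rho> - sqrt (2 * \<epsilon> * M)"
  shows "r \<le> \<rho>"
proof -
  have "0 \<le> sqrt (2 * \<epsilon> * M)"
    using bnd[of 0] eps by simp
  with assms show ?thesis by linarith
qed

lemma upper_env_maximizer_near:
  assumes "y \<in> cball 0 \<rho>"
  obtains h where "h $ k = 0" "norm h \<le> sqrt (2 * \<epsilon> * M)" "y + h \<in> cball 0 \<rho>"
    "upper_env k \<rho> \<epsilon> u y = u (y + h) - (norm h)\<^sup>2 / \<epsilon>"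
proof -
  obtain x where x: "x \<in> cball 0 \<rho>" "x $ k = y $ k"
    "upper_env k \<rho> \<epsilon> u y = u x - (norm (x - y))\<^sup>2 / \<epsilon>"
    using upper_env_attained[OF assms] by blast
  have "u y \<le> upper_env k \<rho> \<epsilon> u y"
    using upper_env_ge[OF assms refl] by simp
  then have "(norm (x - y))\<^sup>2 / \<epsilon> \<le> u x - u y"
    using x(3) by simp
  also have "\<dots> \<le> 2 * M"
    using bnd[of x] bnd[of y] x(1) assms cball_rho_subset by force
  finally have "(norm (x - y))\<^sup>2 \<le> 2 * \<epsilon> * M"
    using eps by (simp add: divide_le_eq mult.commute mult.left_commute)
  then have "norm (x - y) \<le> sqrt (2 * \<epsilon> * M)"
    by (rule real_le_rsqrt)
  then show thesis
    using x by (intro that[of "x - y"]) auto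
qed

lemma upper_env_touching_transfer:
  assumes r: "r \<le> \<rho> - sqrt (2 * \<epsilon> * M)" and x0: "x0 \<in> ball 0 r"
    and touch: "touches_above (ball 0 r) (upper_env k \<rho> \<epsilon> u) \<phi> x0"
  obtains h where "h $ k = 0" "norm h \<le> sqrt (2 * \<epsilon> * M)" "x0 + h \<in> ball 0 1"
    "touches_above (ball 0 1) u (\<lambda>x. \<phi> (x - h) + (norm h)\<^sup>2 / \<epsilon>) (x0 + h)"
proof -
  have "x0 \<in> cball 0 \<rho>"
    using x0 radius_le_rho[OF r] by simp
  then obtain h where h: "h $ k = 0" "norm h \<le> sqrt (2 * \<epsilon> * M)" "x0 + h \<in> cball 0 \<rho>"
    "upper_env k \<rho> \<epsilon> u x0 = u (x0 + h) - (norm h)\<^sup>2 / \<epsilon>"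
    by (rule upper_env_maximizer_near)
  have "norm (x0 + h) \<le> norm x0 + norm h"
    by (rule norm_triangle_ineq)
  then have x0h: "norm (x0 + h) < \<rho>"
    using x0 h(2) r by simp
  obtain d where d: "0 < d" "\<And>x. x \<in> ball 0 r \<inter> ball x0 d \<Longrightarrow> upper_env k \<rho> \<epsilon> u x \<le> \<phi> x"
    and at_x0: "\<phi> x0 = upper_env k \<rho> \<epsilon> u x0"
    using touch unfolding touches_above_def by blast
  define d' where "d' = min d (min (r - norm x0) (\<rho> - norm (x0 + h)))"
  have "0 < d'"
    using d(1) x0 x0h by (simp add: d'_def)
  moreover have "u x \<le> \<phi> (x - h) + (norm h)\<^sup>2 / \<epsilon>" if "x \<in> ball 0 1 \<inter> ball (x0 + h) d'" for x
  proof -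
    have near: "norm (x - (x0 + h)) < d'"
      using that by (simp add: dist_norm norm_minus_commute)
    have "norm (x - h) \<le> norm (x - (x0 + h)) + norm x0"
      using norm_triangle_ineq[of "x - (x0 + h)" x0] by (simp add: algebra_simps)
    moreover have "dist x0 (x - h) = norm (x - (x0 + h))"
      by (simp add: dist_norm algebra_simps norm_minus_commute)
    ultimately have "x - h \<in> ball 0 r \<inter> ball x0 d"
      using near by (simp add: d'_def)
    moreover have "norm x \<le> norm (x - (x0 + h)) + norm (x0 + h)"
      using norm_triangle_ineq[of "x - (x0 + h)" "x0 + h"] by simp
    then have "x \<in> cball 0 \<rho>"
      using near by (simp add: d'_def)
    then have "u x - (norm h)\<^sup>2 / \<epsilon> \<le> upper_env k \<rho> \<epsilon> u (x - h)"
      using upper_env_ge[of x "x - h"] h(1) by simp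
    ultimately show ?thesis
      using d(2) by fastforce
  qed
  ultimately have "touches_above (ball 0 1) u (\<lambda>x. \<phi> (x - h) + (norm h)\<^sup>2 / \<epsilon>) (x0 + h)"
    unfolding touches_above_def using h(4) at_x0 by (auto intro!: exI[of _ d'])
  then show thesis
    using h cball_rho_subset by (intro that[of h]) auto
qed

lemma upper_env_interior_subsolution:
  assumes r: "r \<le> \<rho> - sqrt (2 * \<epsilon> * M)"
    and sub: "\<forall>x0 \<phi>. x0 \<in> ball 0 1 \<and> P (x0 $ k) \<and> touches_above (ball 0 1) u \<phi> x0 \<and>
      (\<exists>d>0. C2_on (ball x0 d) \<phi>) \<longrightarrow> f x0 \<le> F (hess \<phi> x0)"
    and uc: "uniformly_continuous_on (ball 0 1 \<inter> {x. P (x $ k)}) f"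
  shows "\<forall>x0 \<phi>. x0 \<in> ball 0 r \<and> P (x0 $ k) \<and> touches_above (ball 0 r) (upper_env k \<rho> \<epsilon> u) \<phi> x0 \<and>
      (\<exists>d>0. C2_on (ball x0 d) \<phi>) \<longrightarrow>
      f x0 - modc (ball 0 1 \<inter> {x. P (x $ k)}) f (sqrt (2 * \<epsilon> * M)) \<le> F (hess \<phi> x0)"
proof (intro allI impI, elim conjE exE)
  fix x0 \<phi> d
  assume x0: "x0 \<in> ball 0 r" and side: "P (x0 $ k)"
    and touch: "touches_above (ball 0 r) (upper_env k \<rho> \<epsilon> u) \<phi> x0"
    and d: "0 < d" and C2: "C2_on (ball x0 d) \<phi>"
  obtain h where h: "h $ k = 0" "norm h \<le> sqrt (2 * \<epsilon> * M)" "x0 + h \<in> ball 0 1"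
    "touches_above (ball 0 1) u (\<lambda>x. \<phi> (x - h) + (norm h)\<^sup>2 / \<epsilon>) (x0 + h)"
    using upper_env_touching_transfer[OF r x0 touch] by blast
  have "C2_on (ball (x0 + h) d) (\<lambda>x. \<phi> (x - h) + (norm h)\<^sup>2 / \<epsilon>)"
    by (rule C2_on_shift[OF C2]) (auto simp: dist_norm algebra_simps)
  moreover have "P ((x0 + h) $ k)"
    using side h(1) by simp
  ultimately have "f (x0 + h) \<le> F (hess (\<lambda>x. \<phi> (x - h) + (norm h)\<^sup>2 / \<epsilon>) (x0 + h))"
    using sub h(3,4) d by blast
  then have "f (x0 + h) \<le> F (hess \<phi> x0)"
    by (simp add: hess_shift)
  moreover have "\<bar>f x0 - f (x0 + h)\<bar> \<le> modc (ball 0 1 \<inter> {x. P (x $ k)}) f (sqrt (2 * \<epsilon> * M))"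
    using x0 side h radius_le_rho[OF r] rho by (intro abs_le_modc[OF uc]) (auto simp: dist_norm)
  ultimately show "f x0 - modc (ball 0 1 \<inter> {x. P (x $ k)}) f (sqrt (2 * \<epsilon> * M)) \<le> F (hess \<phi> x0)"
    by linarith
qed

lemma upper_env_transmission_subsolution:
  assumes r: "r \<le> \<rho> - sqrt (2 * \<epsilon> * M)"
    and sub: "\<forall>x0 \<phi> \<delta> \<psi>p \<psi>m Up Um. x0 \<in> ball 0 1 \<and> x0 $ k = 0 \<and> touches_above (ball 0 1) u \<phi> x0 \<and>
      0 < \<delta> \<and> continuous_on (cball x0 \<delta>) \<phi> \<and>
      closure (ball x0 \<delta> \<inter> {x. 0 < x $ k}) \<subseteq> Up \<and> C2_on Up \<psi>p \<and>
      (\<forall>x\<in>closure (ball x0 \<delta> \<inter> {x. 0 < x $ k}). \<psi>p x = \<phi> x) \<and>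
      closure (ball x0 \<delta> \<inter> {x. x $ k < 0}) \<subseteq> Um \<and> C2_on Um \<psi>m \<and>
      (\<forall>x\<in>closure (ball x0 \<delta> \<inter> {x. x $ k < 0}). \<psi>m x = \<phi> x)
      \<longrightarrow> g x0 \<le> pderiv k \<psi>p x0 - pderiv k \<psi>m x0"
    and uc: "uniformly_continuous_on (ball 0 1 \<inter> {x. x $ k = 0}) g"
  shows "\<forall>x0 \<phi> \<delta> \<psi>p \<psi>m Up Um. x0 \<in> ball 0 r \<and> x0 $ k = 0 \<and>
      touches_above (ball 0 r) (upper_env k \<rho> \<epsilon> u) \<phi> x0 \<and>
      0 < \<delta> \<and> continuous_on (cball x0 \<delta>) \<phi> \<and>
      closure (ball x0 \<delta> \<inter> {x. 0 < x $ k}) \<subseteq> Up \<and> C2_on Up \<psi>p \<and>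
      (\<forall>x\<in>closure (ball x0 \<delta> \<inter> {x. 0 < x $ k}). \<psi>p x = \<phi> x) \<and>
      closure (ball x0 \<delta> \<inter> {x. x $ k < 0}) \<subseteq> Um \<and> C2_on Um \<psi>m \<and>
      (\<forall>x\<in>closure (ball x0 \<delta> \<inter> {x. x $ k < 0}). \<psi>m x = \<phi> x)
      \<longrightarrow> g x0 - modc (ball 0 1 \<inter> {x. x $ k = 0}) g (sqrt (2 * \<epsilon> * M))
          \<le> pderiv k \<psi>p x0 - pderiv k \<psi>m x0"
proof (intro allI impI, elim conjE)
  fix x0 \<phi> \<delta> \<psi>p \<psi>m Up Um
  assume x0: "x0 \<in> ball 0 r" and on_T: "x0 $ k = 0"
    and touch: "touches_above (ball 0 r) (upper_env k \<rho> \<epsilon> u) \<phi> x0"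
    and \<delta>: "0 < \<delta>" and cont: "continuous_on (cball x0 \<delta>) \<phi>"
    and Up: "closure (ball x0 \<delta> \<inter> {x. 0 < x $ k}) \<subseteq> Up" and C2p: "C2_on Up \<psi>p"
    and eqp: "\<forall>x\<in>closure (ball x0 \<delta> \<inter> {x. 0 < x $ k}). \<psi>p x = \<phi> x"
    and Um: "closure (ball x0 \<delta> \<inter> {x. x $ k < 0}) \<subseteq> Um" and C2m: "C2_on Um \<psi>m"
    and eqm: "\<forall>x\<in>closure (ball x0 \<delta> \<inter> {x. x $ k < 0}). \<psi>m x = \<phi> x"
  obtain h where h: "h $ k = 0" "norm h \<le> sqrt (2 * \<epsilon> * M)" "x0 + h \<in> ball 0 1"
    "touches_above (ball 0 1) u (\<lambda>x. \<phi> (x - h) + (norm h)\<^sup>2 / \<epsilon>) (x0 + h)"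
    using upper_env_touching_transfer[OF r x0 touch] by blast
  define c where "c = (norm h)\<^sup>2 / \<epsilon>"
  have shifted_side:
    "closure (ball (x0 + h) \<delta> \<inter> {x. P (x $ k)}) \<subseteq> (+) h ` U \<and> C2_on ((+) h ` U) (\<lambda>x. \<psi> (x - h) + c) \<and>
     (\<forall>x\<in>closure (ball (x0 + h) \<delta> \<inter> {x. P (x $ k)}). \<psi> (x - h) + c = \<phi> (x - h) + c)"
    if "closure (ball x0 \<delta> \<inter> {x. P (x $ k)}) \<subseteq> U" "C2_on U \<psi>"
      "\<forall>x\<in>closure (ball x0 \<delta> \<inter> {x. P (x $ k)}). \<psi> x = \<phi> x" for P U \<psi>
    using that open_translation[of U h] C2_on_shift[of U \<psi> "(+) h ` U" h c]
    by (auto simp: mem_closure_half_ball_translate[OF h(1)] translate_mem_iff C2_on_def)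
  have "continuous_on (cball (x0 + h) \<delta>) (\<lambda>x. \<phi> (x - h) + c)"
    using cont by (intro continuous_intros continuous_on_compose2[OF cont])
      (auto simp: dist_norm algebra_simps)
  then have "g (x0 + h) \<le> pderiv k (\<lambda>x. \<psi>p (x - h) + c) (x0 + h) - pderiv k (\<lambda>x. \<psi>m (x - h) + c) (x0 + h)"
    using sub[rule_format, of "x0 + h" "\<lambda>x. \<phi> (x - h) + c" \<delta> "(+) h ` Up" _ "(+) h ` Um"]
      shifted_side[of "\<lambda>t. 0 < t", OF Up C2p eqp] shifted_side[of "\<lambda>t. t < 0", OF Um C2m eqm]
      h on_T \<delta> by (simp add: c_def)
  then have "g (x0 + h) \<le> pderiv k \<psi>p x0 - pderiv k \<psi>m x0"
    by (simp add: pderiv_shift)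
  moreover have "\<bar>g x0 - g (x0 + h)\<bar> \<le> modc (ball 0 1 \<inter> {x. x $ k = 0}) g (sqrt (2 * \<epsilon> * M))"
    using x0 on_T h radius_le_rho[OF r] rho by (intro abs_le_modc[OF uc]) (auto simp: dist_norm)
  ultimately show "g x0 - modc (ball 0 1 \<inter> {x. x $ k = 0}) g (sqrt (2 * \<epsilon> * M))
      \<le> pderiv k \<psi>p x0 - pderiv k \<psi>m x0"
    by linarith
qed

lemma visc_sub_upper_env:
  assumes r: "r \<le> \<rho> - sqrt (2 * \<epsilon> * M)" and sub: "visc_sub k 1 Fp Fm fp fm g u"
    and "uniformly_continuous_on (ball 0 1 \<inter> {x. 0 < x $ k}) fp"
    and "uniformly_continuous_on (ball 0 1 \<inter> {x. x $ k < 0}) fm"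
    and "uniformly_continuous_on (ball 0 1 \<inter> {x. x $ k = 0}) g"
  shows "visc_sub k r Fp Fm
      (\<lambda>x. fp x - modc (ball 0 1 \<inter> {x. 0 < x $ k}) fp (sqrt (2 * \<epsilon> * M)))
      (\<lambda>x. fm x - modc (ball 0 1 \<inter> {x. x $ k < 0}) fm (sqrt (2 * \<epsilon> * M)))
      (\<lambda>x. g x - modc (ball 0 1 \<inter> {x. x $ k = 0}) g (sqrt (2 * \<epsilon> * M)))
      (upper_env k \<rho> \<epsilon> u)"
  using sub assms(3-5) unfolding visc_sub_def
  by (intro conjI usc_on_upper_env[OF radius_le_rho[OF r]]
      upper_env_interior_subsolution[OF r, of "\<lambda>t. 0 < t"]
      upper_env_interior_subsolution[OF r, of "\<lambda>t. t < 0"]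
      upper_env_transmission_subsolution[OF r]) blast+

end

theorem mainTheorem11:
  fixes k :: "'n::finite" and lam Lam \<rho> :: real
    and Fp Fm :: "real^'n^'n \<Rightarrow> real"
    and fp fm g u :: "real^'n \<Rightarrow> real"
  assumes "ellip_class lam Lam Fp" and "ellip_class lam Lam Fm"
    and "uniformly_continuous_on (ball 0 1 \<inter> {x. 0 < x $ k}) fp"
    and "uniformly_continuous_on (ball 0 1 \<inter> {x. x $ k < 0}) fm"
    and "uniformly_continuous_on (ball 0 1 \<inter> {x. x $ k = 0}) g"
    and "bounded (u ` ball 0 1)"
    and "visc_sub k 1 Fp Fm fp fm g u"
    and "0 < \<rho>" and "\<rho> < 1"
  shows "\<exists>\<epsilon>0>0. \<forall>\<epsilon>. 0 < \<epsilon> \<and> \<epsilon> < \<epsilon>0 \<longrightarrow>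
           (let r\<epsilon> = sqrt (2 * \<epsilon> * sup_norm_B1 u) in
            \<forall>r. r \<le> \<rho> - r\<epsilon> \<longrightarrow>
              visc_sub k r Fp Fm
                (\<lambda>x. fp x - modc (ball 0 1 \<inter> {x. 0 < x $ k}) fp r\<epsilon>)
                (\<lambda>x. fm x - modc (ball 0 1 \<inter> {x. x $ k < 0}) fm r\<epsilon>)
                (\<lambda>x. g x - modc (ball 0 1 \<inter> {x. x $ k = 0}) g r\<epsilon>)
                (upper_env k \<rho> \<epsilon> u))"
proof (intro exI[of _ 1] conjI allI impI zero_less_one, unfold Let_def,
    intro allI impI visc_sub_upper_env)
  show "usc_on (ball 0 1) u"
    using assms(7) by (simp add: visc_sub_def)
  show "\<And>x. x \<in> ball 0 1 \<Longrightarrow> \<bar>u x\<bar> \<le> sup_norm_B1 u"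
    by (rule abs_le_sup_norm_B1[OF assms(6)])
qed (use assms in auto)

end
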